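(* Let $\mathcal{G}=\langle\mathbb{V},\mathbb{E}\rangle$ be as in the context, let $e:\mathbb{E}\to\{1,\dots,|\mathbb{E}|\}$ be a bijection, and let $\mathcal{F}$ be a feedback arc set of $\mathcal{G}$. Then there exists an $\mathcal{H}^{(|\mathbb{V}|\cdot(|\mathbb{E}|+1)+|\mathcal{F}|)}$-partition of $\mathcal{P}(\mathcal{G},e)$.
   Context: Standing assumption: $\mathcal{G}=\langle\mathbb{V},\mathbb{E}\rangle$ is a finite directed graph with $\mathbb{V}\ne\emptyset$, without self-loops, in which every vertex has in-degree $1$ or out-degree $1$; let $m=|\mathbb{E}|$. A feedback arc set of $\mathcal{G}$ is a subset of $\mathbb{E}$ meeting every directed cycle. For $v\in\mathbb{V}$ the gadget $\mathcal{N}_v=\langle\mathcal{V}_v,\mathcal{E}_v\rangle$ has vertices $\mathcal{V}_v=\{v_{i,j}:0\le i,j\le m\}$ (distinct for distinct $v$) and arcs $\mathcal{E}_v=\{\langle v_{i,j},v_{i,j+1}\rangle:0\le i\le m,0\le j<m\}\cup\{\langle v_{i,j},v_{i+1,j}\rangle:0\le i<m,0\le j\le m\}$. The digraph $\mathcal{P}(\mathcal{G},e)=\langle\mathbb{V}_{\mathcal{G}},\mathbb{E}_{\mathcal{G}}\rangle$ has vertex set $\mathbb{V}_{\mathcal{G}}=\bigcup_{v\in\mathbb{V}}\mathcal{V}_v\cup\mathbb{E}$ (each arc of $\mathcal{G}$ is also a vertex) and arc set $\mathbb{E}_{\mathcal{G}}=\bigcup_{v\in\mathbb{V}}\mathcal{E}_v\cup\{\langle\langle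 v,u\rangle,v_{e(\langle v,u\rangle),0}\rangle:\langle v,u\rangle\in\mathbb{E}\}\cup\{\langle\langle v,u\rangle,u_{0,e(\langle v,u\rangle)}\rangle:\langle v,u\rangle\in\mathbb{E}\}$; it is a DAG. For a DAG $G$, a partition $\pi$ of its vertex set is an $\mathcal{H}^{(k)}$-partition if $|\pi|=k$, every induced subgraph $G[P]$, $P\in\pi$, has a directed Hamiltonian path, and the quotient digraph $G/\pi$ (vertex set $\pi$, arc $\langle P,Q\rangle$ for $P\ne Q$ whenever some arc of $G$ goes from $P$ to $Q$) is acyclic. *)

theory Defs
  imports Main
begin

definition std_graph :: "'v set \<Rightarrow> ('v \<times> 'v) set \<Rightarrow> bool" where
  "std_graph V E \<longleftrightarrow> finite V \<and> V \<noteq> {} \<and> E \<subseteq> V \<times> V \<and> (\<forall>v. (v, v) \<notin> E) \<and>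
     (\<forall>v\<in>V. card {u. (u, v) \<in> E} = 1 \<or> card {u. (v, u) \<in> E} = 1)"

definition directed_cycle :: "('v \<times> 'v) set \<Rightarrow> 'v list \<Rightarrow> bool" where
  "directed_cycle E cs \<longleftrightarrow> cs \<noteq> [] \<and> distinct cs \<and>
     (\<forall>i < length cs. (cs ! i, cs ! ((i + 1) mod length cs)) \<in> E)"

definition cycle_arcs :: "'v list \<Rightarrow> ('v \<times> 'v) set" where
  "cycle_arcs cs = {(cs ! i, cs ! ((i + 1) mod length cs)) | i. i < length cs}"

definition feedback_arc_set :: "('v \<times> 'v) set \<Rightarrow> ('v \<times> 'v) set \<Rightarrow> bool" where
  "feedback_arc_set E F \<longleftrightarrow> F \<subseteq> E \<and>
     (\<forall>cs. directed_cycle E cs \<longrightarrow> cycle_arcs cs \<inter> F \<noteq> {})"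

text \<open>Vertices of P(G,e): gadget vertices v_{i,j} and the arcs of G themselves.\<close>
datatype 'v pvert = Gad 'v nat nat | ArcV "'v \<times> 'v"

definition P_verts :: "'v set \<Rightarrow> ('v \<times> 'v) set \<Rightarrow> 'v pvert set" where
  "P_verts V E = {Gad v i j | v i j. v \<in> V \<and> i \<le> card E \<and> j \<le> card E} \<union> ArcV ` E"

definition P_arcs :: "'v set \<Rightarrow> ('v \<times> 'v) set \<Rightarrow> ('v \<times> 'v \<Rightarrow> nat) \<Rightarrow> ('v pvert \<times> 'v pvert) set" where
  "P_arcs V E e =
     {(Gad v i j, Gad v i (j + 1)) | v i j. v \<in> V \<and> i \<le> card E \<and> j < card E}
   \<union> {(Gad v i j, Gad v (i + 1) j) | v i j. v \<in> V \<and> i < card E \<and> j \<le> card E}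
   \<union> {(ArcV (v, u), Gad v (e (v, u)) 0) | v u. (v, u) \<in> E}
   \<union> {(ArcV (v, u), Gad u 0 (e (v, u))) | v u. (v, u) \<in> E}"

definition has_ham_path :: "('a \<times> 'a) set \<Rightarrow> 'a set \<Rightarrow> bool" where
  "has_ham_path A P \<longleftrightarrow> (\<exists>ps. distinct ps \<and> set ps = P \<and>
     (\<forall>i. Suc i < length ps \<longrightarrow> (ps ! i, ps ! Suc i) \<in> A))"

definition quotient_rel :: "('a \<times> 'a) set \<Rightarrow> 'a set set \<Rightarrow> ('a set \<times> 'a set) set" where
  "quotient_rel A \<pi> = {(P, Q). P \<in> \<pi> \<and> Q \<in> \<pi> \<and> P \<noteq> Q \<and> (\<exists>x\<in>P. \<exists>y\<in>Q. (x, y) \<in> A)}"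

definition is_partition :: "'a set \<Rightarrow> 'a set set \<Rightarrow> bool" where
  "is_partition Vs \<pi> \<longleftrightarrow> (\<forall>P\<in>\<pi>. P \<noteq> {}) \<and> \<Union>\<pi> = Vs \<and>
     (\<forall>P\<in>\<pi>. \<forall>Q\<in>\<pi>. P \<noteq> Q \<longrightarrow> P \<inter> Q = {})"

definition H_partition :: "nat \<Rightarrow> 'a set \<Rightarrow> ('a \<times> 'a) set \<Rightarrow> 'a set set \<Rightarrow> bool" where
  "H_partition k Vs A \<pi> \<longleftrightarrow> is_partition Vs \<pi> \<and> card \<pi> = k \<and>
     (\<forall>P\<in>\<pi>. has_ham_path A P) \<and> acyclic (quotient_rel A \<pi>)"

end

theory Submission
  imports Defs "HOL-Library.Transitive_Closure_Table"
begin

(* Cut every gadget N_v into its m + 1 rows, where row i of N_v also receives the arc (v, u)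
   of G with e(v, u) = i (the arc entering v_{i,0}) unless that arc lies in F; each arc in F
   forms a block of its own.  This gives |V|(m + 1) + |F| blocks, each traversed by a path.
   Between different blocks, arcs of P(G, e) only go from a singleton to a row, from row (v, i)
   to row (v, i + 1), or from row (v, e(v, u)) to row (u, 0) along an arc (v, u) of E - F.
   As F meets every cycle, E - F is acyclic, and so is the quotient. *)

lemma directed_cycle_if_trancl:
  assumes "(x, x) \<in> R\<^sup>+"
  shows "\<exists>cs. directed_cycle R cs"
proof -
  obtain z where "(x, z) \<in> R\<^sup>*" and zx: "(z, x) \<in> R"
    using tranclD2[OF assms] by blast
  then obtain xs where "rtrancl_path (\<lambda>a b. (a, b) \<in> R) x xs z"
    unfolding rtrancl_def rtranclp_eq_rtrancl_path by blast
  then obtain ys where path: "rtrancl_path (\<lambda>a b. (a, b) \<in> R) x ys z"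
    and dist: "distinct (x # ys)"
    by (rule rtrancl_path_distinct)
  have last: "last (x # ys) = z"
    using path by (cases ys) (auto elim: rtrancl_path.cases dest: rtrancl_path_last)
  have "(cs ! i, cs ! ((i + 1) mod length cs)) \<in> R"
    if cs: "cs = x # ys" and i: "i < length cs" for cs i
  proof (cases "Suc i < length cs")
    case True
    then show ?thesis using rtrancl_path_nth[OF path, of i] cs by simp
  next
    case False
    then have "i = length cs - 1" using i by simp
    then have "cs ! i = last cs" and "(i + 1) mod length cs = 0"
      using cs by (simp_all add: last_conv_nth del: length_Cons)
    then show ?thesis using zx last cs by simp
  qed
  then have "directed_cycle R (x # ys)"
    using dist by (simp add: directed_cycle_def)
  then show ?thesis ..
qed

lemma acyclic_Diff_feedback_arc_set:
  assumes "feedback_arc_set E F"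
  shows "acyclic (E - F)"
proof (rule acyclicI, intro allI notI)
  fix x assume "(x, x) \<in> (E - F)\<^sup>+"
  then obtain cs where cs: "directed_cycle (E - F) cs"
    using directed_cycle_if_trancl by metis
  then have "directed_cycle E cs"
    by (auto simp: directed_cycle_def)
  with assms have "cycle_arcs cs \<inter> F \<noteq> {}"
    by (simp add: feedback_arc_set_def)
  moreover have "cycle_arcs cs \<subseteq> E - F"
    using cs unfolding directed_cycle_def cycle_arcs_def by auto
  ultimately show False
    by blast
qed

lemma acyclic_inv_image:
  assumes "acyclic r"
  shows "acyclic (inv_image r f)"
proof -
  have "(f a, f b) \<in> r\<^sup>+" if "(a, b) \<in> (inv_image r f)\<^sup>+" for a b
    using that by induction (auto intro: trancl_into_trancl)
  with assms show ?thesis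
    unfolding acyclic_def by blast
qed

lemma has_ham_path_chain:
  assumes "inj_on f {..n}" and "\<And>j. j < n \<Longrightarrow> (f j, f (Suc j)) \<in> A"
  shows "has_ham_path A (f ` {..n})"
  unfolding has_ham_path_def
proof (intro exI conjI allI impI)
  have "set [0..<Suc n] = {..n}"
    by auto
  then show "distinct (map f [0..<Suc n])" and "set (map f [0..<Suc n]) = f ` {..n}"
    using assms(1) by (simp_all add: distinct_map del: upt_Suc)
  fix i assume "Suc i < length (map f [0..<Suc n])"
  then show "(map f [0..<Suc n] ! i, map f [0..<Suc n] ! Suc i) \<in> A"
    using assms(2) by (simp del: upt_Suc)
qed

lemma H_partition_blocks:
  assumes index: "\<And>k x. k \<in> I \<Longrightarrow> x \<in> blk k \<Longrightarrow> idx x = k"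
    and nonempty: "\<And>k. k \<in> I \<Longrightarrow> blk k \<noteq> {}"
    and cover: "(\<Union>k\<in>I. blk k) = Vs"
    and ham: "\<And>k. k \<in> I \<Longrightarrow> has_ham_path A (blk k)"
    and arcs: "\<And>x y. (x, y) \<in> A \<Longrightarrow> idx x \<noteq> idx y \<Longrightarrow> (idx x, idx y) \<in> T"
    and "acyclic T"
  shows "H_partition (card I) Vs A (blk ` I)"
proof -
  have "inj_on blk I"
    using index nonempty by (metis all_not_in_conv inj_onI)
  have "blk k \<inter> blk l = {}" if "k \<in> I" "l \<in> I" "k \<noteq> l" for k l
    using index that by blast
  then have "is_partition Vs (blk ` I)"
    unfolding is_partition_def using nonempty cover by auto
  moreover have "card (blk ` I) = card I"
    using \<open>inj_on blk I\<close> by (rule card_image)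
  moreover have "quotient_rel A (blk ` I) \<subseteq> inv_image T (\<lambda>P. idx (SOME x. x \<in> P))"
  proof
    fix PQ assume "PQ \<in> quotient_rel A (blk ` I)"
    then obtain k l x y where PQ: "PQ = (blk k, blk l)" and kl: "k \<in> I" "l \<in> I" "k \<noteq> l"
      and "x \<in> blk k" "y \<in> blk l" "(x, y) \<in> A"
      unfolding quotient_rel_def by auto
    then have "(k, l) \<in> T"
      using index arcs by metis
    moreover have "idx (SOME x. x \<in> blk j) = j" if "j \<in> I" for j
      using index nonempty that by (metis some_in_eq)
    ultimately show "PQ \<in> inv_image T (\<lambda>P. idx (SOME x. x \<in> P))"
      using PQ kl by simp
  qed
  then have "acyclic (quotient_rel A (blk ` I))"
    using acyclic_subset acyclic_inv_image \<open>acyclic T\<close> by blast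
  ultimately show ?thesis
    unfolding H_partition_def using ham by blast
qed

lemma has_ham_path_singleton: "has_ham_path A {x}"
  unfolding has_ham_path_def by (intro exI[of _ "[x]"]) simp

definition row_block ::
    "('v \<times> 'v) set \<Rightarrow> ('v \<times> 'v) set \<Rightarrow> ('v \<times> 'v \<Rightarrow> nat) \<Rightarrow> 'v \<Rightarrow> nat \<Rightarrow> 'v pvert set" where
  "row_block E F e v i = Gad v i ` {..card E} \<union> ArcV ` {a \<in> E - F. fst a = v \<and> e a = i}"

definition block ::
    "('v \<times> 'v) set \<Rightarrow> ('v \<times> 'v) set \<Rightarrow> ('v \<times> 'v \<Rightarrow> nat) \<Rightarrow> ('v \<times> nat) + ('v \<times> 'v) \<Rightarrow> 'v pvert set" where
  "block E F e = case_sum (\<lambda>(v, i). row_block E F e v i) (\<lambda>a. {ArcV a})"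

fun block_index :: "('v \<times> 'v) set \<Rightarrow> ('v \<times> 'v \<Rightarrow> nat) \<Rightarrow> 'v pvert \<Rightarrow> ('v \<times> nat) + ('v \<times> 'v)" where
  "block_index F e (Gad v i j) = Inl (v, i)"
| "block_index F e (ArcV a) = (if a \<in> F then Inr a else Inl (fst a, e a))"

definition block_order :: "('v \<times> 'v) set \<Rightarrow> (('v \<times> nat) + ('v \<times> 'v)) rel" where
  "block_order R = {(Inr a, Inl k) | a k. True} \<union> {(Inl (v, i), Inl (v, j)) | v i j. i < j}
     \<union> {(Inl (v, i), Inl (u, j)) | v u i j. (v, u) \<in> R}"

lemma trancl_block_order:
  assumes "(k, l) \<in> (block_order R)\<^sup>+"
  shows "(\<exists>a. k = Inr a) \<and> (\<exists>u j. l = Inl (u, j))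
    \<or> (\<exists>v i u j. k = Inl (v, i) \<and> l = Inl (u, j) \<and> ((v, u) \<in> R\<^sup>+ \<or> v = u \<and> i < j))"
  using assms
proof (induction rule: trancl_induct)
  case (base l)
  then show ?case
    unfolding block_order_def by auto
next
  case (step l l')
  then show ?case
    unfolding block_order_def by (auto intro: trancl_into_trancl)
qed

lemma acyclic_block_order:
  assumes "acyclic R"
  shows "acyclic (block_order R)"
  using assms trancl_block_order unfolding acyclic_def by fastforce

lemma block_index_block:
  assumes "k \<in> (V \<times> {..card E}) <+> F" and "x \<in> block E F e k"
  shows "block_index F e x = k"
  using assms by (auto simp: block_def row_block_def)

lemma block_index_P_arcs:
  assumes "(x, y) \<in> P_arcs V E e" and "block_index F e x \<noteq> block_index F e y"
  shows "(block_index F e x, block_index F e y) \<in> block_order (E - F)"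
  using assms by (auto simp: P_arcs_def block_order_def split: if_splits)

lemma Union_block:
  assumes "E \<subseteq> V \<times> V" and "F \<subseteq> E" and "\<And>a. a \<in> E \<Longrightarrow> e a \<le> card E"
  shows "(\<Union>k \<in> (V \<times> {..card E}) <+> F. block E F e k) = P_verts V E"
proof (intro equalityI subsetI)
  fix x assume "x \<in> (\<Union>k \<in> (V \<times> {..card E}) <+> F. block E F e k)"
  then show "x \<in> P_verts V E"
    using assms(2) by (auto simp: block_def row_block_def P_verts_def)
next
  fix x assume "x \<in> P_verts V E"
  then consider (gad) v i j where "x = Gad v i j" "v \<in> V" "i \<le> card E" "j \<le> card E"
    | (arc) a where "x = ArcV a" "a \<in> E"
    unfolding P_verts_def by blast
  then show "x \<in> (\<Union>k \<in> (V \<times> {..card E}) <+> F. block E F e k)"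
  proof cases
    case gad
    then show ?thesis
      by (intro UN_I[of "Inl (v, i)"]) (auto simp: block_def row_block_def)
  next
    case arc
    show ?thesis
    proof (cases "a \<in> F")
      case True
      then show ?thesis
        using arc by (intro UN_I[of "Inr a"]) (auto simp: block_def)
    next
      case False
      then show ?thesis
        using arc assms by (intro UN_I[of "Inl (fst a, e a)"]) (auto simp: block_def row_block_def)
    qed
  qed
qed

lemma has_ham_path_row_block:
  assumes "inj_on e E" and "v \<in> V" and "i \<le> card E"
  shows "has_ham_path (P_arcs V E e) (row_block E F e v i)"
proof -
  let ?A = "P_arcs V E e" and ?m = "card E"
  have row_arcs: "(Gad v i j, Gad v i (Suc j)) \<in> ?A" if "j < ?m" for j
    using assms(2,3) that unfolding P_arcs_def by auto
  show ?thesis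
  proof (cases "\<exists>a \<in> E - F. fst a = v \<and> e a = i")
    case False
    then have "row_block E F e v i = Gad v i ` {..?m}"
      by (auto simp: row_block_def)
    then show ?thesis
      using row_arcs by (auto intro: has_ham_path_chain inj_onI)
  next
    case True
    then obtain u where a: "(v, u) \<in> E - F" "e (v, u) = i"
      by auto
    with assms(1) have "{a \<in> E - F. fst a = v \<and> e a = i} = {(v, u)}"
      by (auto dest: inj_onD)
    then have "row_block E F e v i = case_nat (ArcV (v, u)) (Gad v i) ` {..Suc ?m}"
      by (simp add: row_block_def atMost_Suc_eq_insert_0 image_image)
    moreover have "(ArcV (v, u), Gad v i 0) \<in> ?A"
      using a unfolding P_arcs_def by auto
    ultimately show ?thesis
      using row_arcs by (auto intro!: has_ham_path_chain inj_onI split: nat.splits)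
  qed
qed

lemma has_ham_path_block:
  assumes "inj_on e E" and "k \<in> (V \<times> {..card E}) <+> F"
  shows "has_ham_path (P_arcs V E e) (block E F e k)"
  using assms has_ham_path_row_block[OF assms(1)]
  by (cases k) (auto simp: block_def has_ham_path_singleton)

lemma block_nonempty: "block E F e k \<noteq> {}"
  by (cases k) (auto simp: block_def row_block_def)

theorem lemma5p6:
  fixes V :: "'v set" and E :: "('v \<times> 'v) set" and e :: "'v \<times> 'v \<Rightarrow> nat"
    and F :: "('v \<times> 'v) set"
  assumes "std_graph V E"
    and "bij_betw e E {1..card E}"
    and "feedback_arc_set E F"
  shows "\<exists>\<pi>. H_partition (card V * (card E + 1) + card F) (P_verts V E) (P_arcs V E e) \<pi>"
proof -
  let ?I = "(V \<times> {..card E}) <+> F"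
  have "finite V" and EV: "E \<subseteq> V \<times> V"
    using assms(1) by (auto simp: std_graph_def)
  have FE: "F \<subseteq> E"
    using assms(3) by (simp add: feedback_arc_set_def)
  then have "finite F"
    using \<open>finite V\<close> EV by (meson finite_SigmaI finite_subset)
  have "inj_on e E" and e_le: "\<And>a. a \<in> E \<Longrightarrow> e a \<le> card E"
    using assms(2) by (auto simp: bij_betw_def)
  have rows_finite: "finite (V \<times> {..card E})"
    using \<open>finite V\<close> by simp
  have card_I: "card ?I = card V * (card E + 1) + card F"
    using card_Plus[OF rows_finite \<open>finite F\<close>] by (simp add: card_cartesian_product)
  have "H_partition (card ?I) (P_verts V E) (P_arcs V E e) (block E F e ` ?I)"
    using block_index_block block_nonempty Union_block[OF EV FE e_le]
      has_ham_path_block[OF \<open>inj_on e E\<close>] block_index_P_arcs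
      acyclic_block_order[OF acyclic_Diff_feedback_arc_set[OF assms(3)]]
    by (rule H_partition_blocks)
  then show ?thesis
    unfolding card_I ..
qed

end
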